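(* Let $c\in(0,1)$ and $C\ge1$ be constants such that for all $n\ge1$, all integers $0\le w\le cn$ and all integers $0\le i\le n/2$, $|K^{(n)}_w(i)|\le C\binom nw(1-\frac{2w}{n})^i$. Let $R\in(0,1)$, $\omega\in(0,c)$ and $\partial^\perp>0$. Let $(\mathcal{C}_j)_{j\ge1}$ be a sequence of binary linear $[n_j,k_j]$ codes with $n_j\to\infty$, $k_j/n_j\to R$, and $d(\mathcal{C}_j^\perp)/n_j\to\partial^\perp$, where $d(\mathcal{C}_j^\perp)$ is the minimum distance of the dual code; let $G_j$ be a generator matrix of $\mathcal{C}_j$. Let $(Z_j)_{j\ge1}$ be any sequence of random vectors, $Z_j$ on $\mathbb{F}_2^{n_j}$. Then there exists a sequence of vectors $e_j\in\mathbb{F}_2^{n_j}$ with $|e_j|/n_j\to\omega$ such that: (i) if $d_{TV}(P_{G_jZ_j},P_{U_{k_j}})=\mathrm{negl}(k_j)$, then $|\mathrm{bias}(e_j^\intercal Z_j)|=\mathrm{negl}(k_j)$; (ii) if $d_{TV}(P_{G_jZ_j},P_{U_{k_j}})=2^{-\Omega(k_j)}$, then $|\mathrm{bias}(e_j^\intercal Z_j)|=2^{-\Omega(k_j)}$.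
   Context: Krawtchouk polynomial: $K^{(n)}_w(i)=\sum_{j=0}^w(-1)^j\binom ij\binom{n-i}{w-j}$. For a $\{0,1\}$-valued random variable $\xi$, $\mathrm{bias}(\xi)=\frac12-\Pr(\xi=1)$. $P_{U_k}$ is uniform on $\mathbb{F}_2^k$; $d_{TV}(P,Q)=\frac12\sum_x|P(x)-Q(x)|$. A function $f$ is negligible, $f(k)=\mathrm{negl}(k)$, if $f(k)=o(k^{-a})$ for every $a>0$ as $k\to\infty$. $f(k)=2^{-\Omega(k)}$ means there is $\beta>0$ with $f(k)\le 2^{-\beta k}$ for all sufficiently large $k$. *)

theory Defs
  imports "HOL-Probability.Probability" "HOL-Library.Landau_Symbols"
begin

text \<open>Vectors of F_2^n are represented by their supports: subsets of {..<n}.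
  Addition is symmetric difference, the Hamming weight is the cardinality,
  and the standard inner product x.y is the parity of card (x \<inter> y)
  (True = 1).\<close>

definition vecs :: "nat \<Rightarrow> nat set set" where
  "vecs n = Pow {..<n}"

definition dot :: "nat set \<Rightarrow> nat set \<Rightarrow> bool" where
  "dot x y = odd (card (x \<inter> y))"

definition krawtchouk :: "nat \<Rightarrow> nat \<Rightarrow> nat \<Rightarrow> int" where
  "krawtchouk n w i = (\<Sum>j=0..w. (-1)^j * int (i choose j) * int ((n - i) choose (w - j)))"

text \<open>A k x n generator matrix over F_2 is given by its rows G 0, ..., G (k-1),
  each a vector of F_2^n.  The message m (a vector of F_2^k) is encoded as
  m^T G.\<close>
definition encode :: "nat \<Rightarrow> (nat \<Rightarrow> nat set) \<Rightarrow> nat set \<Rightarrow> nat set" where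
  "encode n G m = {i. i < n \<and> odd (card {r \<in> m. i \<in> G r})}"

definition is_gen_matrix :: "nat \<Rightarrow> nat \<Rightarrow> (nat \<Rightarrow> nat set) \<Rightarrow> bool" where
  "is_gen_matrix n k G \<longleftrightarrow> (\<forall>r<k. G r \<in> vecs n) \<and> inj_on (encode n G) (vecs k)"

definition lin_code :: "nat \<Rightarrow> nat \<Rightarrow> (nat \<Rightarrow> nat set) \<Rightarrow> nat set set" where
  "lin_code n k G = encode n G ` vecs k"

definition dual_code :: "nat \<Rightarrow> nat set set \<Rightarrow> nat set set" where
  "dual_code n C = {x \<in> vecs n. \<forall>c\<in>C. \<not> dot x c}"

text \<open>Minimum distance of a linear code = minimum weight of a nonzero codeword.\<close>
definition min_dist :: "nat set set \<Rightarrow> nat" where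
  "min_dist C = Inf {card x | x. x \<in> C \<and> x \<noteq> {}}"

definition mat_vec :: "nat \<Rightarrow> (nat \<Rightarrow> nat set) \<Rightarrow> nat set \<Rightarrow> nat set" where
  "mat_vec k G z = {r. r < k \<and> dot (G r) z}"

definition tv_dist :: "'a set \<Rightarrow> 'a pmf \<Rightarrow> 'a pmf \<Rightarrow> real" where
  "tv_dist S P Q = (1/2) * (\<Sum>x\<in>S. \<bar>pmf P x - pmf Q x\<bar>)"

definition uniform_vec :: "nat \<Rightarrow> nat set pmf" where
  "uniform_vec k = pmf_of_set (vecs k)"

definition bias_lin :: "nat set \<Rightarrow> nat set pmf \<Rightarrow> real" where
  "bias_lin e Z = 1/2 - measure_pmf.prob Z {z. dot e z}"

definition negl :: "(nat \<Rightarrow> nat) \<Rightarrow> (nat \<Rightarrow> real) \<Rightarrow> bool" where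
  "negl k f \<longleftrightarrow> (\<forall>a>0. f \<in> o(\<lambda>j. real (k j) powr (-a)))"

definition exp_small :: "(nat \<Rightarrow> nat) \<Rightarrow> (nat \<Rightarrow> real) \<Rightarrow> bool" where
  "exp_small k f \<longleftrightarrow> (\<exists>\<beta>>0. eventually (\<lambda>j. f j \<le> 2 powr (- \<beta> * real (k j))) sequentially)"

end

theory Submission
  imports Defs "HOL-Real_Asymp.Real_Asymp"
begin

text \<open>Let e have weight w \<approx> \<omega>n and minimise |bias(e^T Z)| among all vectors of that weight; it suffices
  to bound the average of (2 bias)^2 over the weight-w vectors. Expanding in characters, this average
  is \<Sum>z z'. P z P z' K_w(|z + z'|) / (n choose w), and the Krawtchouk hypothesis bounds
  K_w(|x|) / (n choose w) by C \<rho>^min(|x|, n - |x|) with \<rho> = 1 - 2w/n. For fixed z, the map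
  x \<mapsto> G (z + x) is injective on the vectors within distance d/2 of 0 or of the all-ones vector, as the
  kernel of G is the dual code of minimum distance d; there the mass of Z is the uniform mass plus a
  deviation bounded by the total variation distance of G Z from uniform. All other x carry weight at
  most \<rho>^(d/2). Apart from the total variation term every error term decays exponentially in n,
  hence in k, so (bias)^2 \<le> M (d_TV + \<gamma>^k) with \<gamma> < 1, which transfers both negligibility and
  2^-\<Omega>(k) decay from d_TV to the bias.\<close>

section \<open>Vectors over F_2 and the dual code\<close>

lemma finite_vecs [simp]: "finite (vecs n)"
  unfolding vecs_def by simp

lemma finite_vec: "x \<in> vecs n \<Longrightarrow> finite x"
  unfolding vecs_def by (auto intro: finite_subset)

lemma card_vecs: "card (vecs n) = 2 ^ n"
  unfolding vecs_def by (simp add: card_Pow)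

lemma sym_diff_vecs: "a \<in> vecs n \<Longrightarrow> b \<in> vecs n \<Longrightarrow> sym_diff a b \<in> vecs n"
  unfolding vecs_def by auto

lemma sym_diff_cancel_left [simp]: "sym_diff z (sym_diff z x) = x"
  by auto

lemma sym_diff_sym_diff_cancel: "sym_diff (sym_diff z x) (sym_diff z y) = sym_diff x y"
  by auto

lemma card_sym_diff:
  assumes "finite a" "finite b"
  shows "card a + card b = card (sym_diff a b) + 2 * card (a \<inter> b)"
proof -
  have "sym_diff a b = (a \<union> b) - (a \<inter> b)" by auto
  hence "card (sym_diff a b) = card (a \<union> b) - card (a \<inter> b)"
    using assms card_Diff_subset[of "a \<inter> b" "a \<union> b"] by auto
  moreover have "card (a \<inter> b) \<le> card (a \<union> b)" using assms by (intro card_mono) auto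
  moreover have "card a + card b = card (a \<union> b) + card (a \<inter> b)" using assms card_Un_Int by blast
  ultimately show ?thesis by simp
qed

lemma card_sym_diff_le: "finite a \<Longrightarrow> finite b \<Longrightarrow> card (sym_diff a b) \<le> card a + card b"
  using card_sym_diff by fastforce

lemma card_Int_sym_diff:
  assumes "finite a"
  shows "card (a \<inter> b) + card (a \<inter> c) = card (a \<inter> sym_diff b c) + 2 * card (a \<inter> b \<inter> c)"
proof -
  have "a \<inter> sym_diff b c = sym_diff (a \<inter> b) (a \<inter> c)" "a \<inter> b \<inter> (a \<inter> c) = a \<inter> b \<inter> c" by auto
  thus ?thesis using card_sym_diff[of "a \<inter> b" "a \<inter> c"] assms by simp
qed

lemma card_sym_diff_lessThan: "x \<in> vecs n \<Longrightarrow> card (sym_diff {..<n} x) = n - card x"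
  unfolding vecs_def by (simp add: Diff_mono card_Diff_subset finite_subset Un_absorb2)

lemma dot_commute: "dot a b = dot b a"
  unfolding dot_def by (simp add: Int_commute)

lemma dot_sym_diff: "finite a \<Longrightarrow> dot a (sym_diff b c) \<longleftrightarrow> dot a b \<noteq> dot a c"
  unfolding dot_def using card_Int_sym_diff[of a b c] by presburger

lemma encode_insert:
  assumes "finite m" "r \<notin> m"
  shows "encode n G (insert r m) = sym_diff (encode n G m) (G r \<inter> {..<n})"
proof -
  have "card {r' \<in> insert r m. i \<in> G r'} = card {r' \<in> m. i \<in> G r'} + (if i \<in> G r then 1 else 0)" for i
  proof -
    have "{r' \<in> insert r m. i \<in> G r'} =
        (if i \<in> G r then insert r {r' \<in> m. i \<in> G r'} else {r' \<in> m. i \<in> G r'})"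
      by auto
    thus ?thesis using assms by auto
  qed
  thus ?thesis unfolding encode_def by auto
qed

lemma dot_encode:
  assumes "finite m" "y \<in> vecs n"
  shows "dot y (encode n G m) \<longleftrightarrow> odd (card {r \<in> m. dot y (G r)})"
  using assms(1)
proof (induction m rule: finite_induct)
  case empty
  then show ?case by (simp add: encode_def dot_def)
next
  case (insert r m)
  have split: "{r' \<in> insert r m. dot y (G r')} =
      (if dot y (G r) then insert r {r' \<in> m. dot y (G r')} else {r' \<in> m. dot y (G r')})"
    by auto
  have "y \<inter> (G r \<inter> {..<n}) = y \<inter> G r" using assms(2) unfolding vecs_def by auto
  hence "dot y (G r \<inter> {..<n}) \<longleftrightarrow> dot y (G r)" unfolding dot_def by simp
  thus ?case
    unfolding encode_insert[OF insert(1,2)] dot_sym_diff[OF finite_vec[OF assms(2)]] insert(3) split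
    using insert(1,2) by auto
qed

text \<open>Two vectors with the same image under z \<mapsto> G z differ by a nonzero vector of the kernel of G,
  which is the dual code.\<close>
lemma min_dist_dual_le_card_sym_diff:
  assumes rows: "\<forall>r<k. G r \<in> vecs n" and ab: "a \<in> vecs n" "b \<in> vecs n"
    and eq: "mat_vec k G a = mat_vec k G b" and ne: "a \<noteq> b"
  shows "min_dist (dual_code n (lin_code n k G)) \<le> card (sym_diff a b)"
proof -
  have ab_vec: "sym_diff a b \<in> vecs n" using ab by (rule sym_diff_vecs)
  have "sym_diff a b \<in> dual_code n (lin_code n k G)"
    unfolding dual_code_def
  proof (intro CollectI conjI ballI ab_vec)
    fix x assume "x \<in> lin_code n k G"
    then obtain m where m: "m \<in> vecs k" "x = encode n G m" unfolding lin_code_def by auto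
    have "\<not> dot (sym_diff a b) (G r)" if "r \<in> m" for r
    proof -
      have r: "r < k" using m(1) that unfolding vecs_def by auto
      hence "dot (G r) a = dot (G r) b" using eq unfolding mat_vec_def by blast
      thus ?thesis using dot_sym_diff[OF finite_vec] rows r dot_commute by metis
    qed
    hence none: "{r \<in> m. dot (sym_diff a b) (G r)} = {}" by auto
    show "\<not> dot (sym_diff a b) x" unfolding m(2) dot_encode[OF finite_vec[OF m(1)] ab_vec] none by simp
  qed
  moreover have "sym_diff a b \<noteq> {}" using ne by auto
  ultimately show ?thesis unfolding min_dist_def
    by (intro cInf_lower) (auto intro: bdd_belowI[of _ 0])
qed

section \<open>Characters and Krawtchouk sums\<close>

definition character :: "nat set \<Rightarrow> nat set \<Rightarrow> real" where
  "character e z = (-1) ^ card (e \<inter> z)"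

lemma character_mult:
  assumes "finite e"
  shows "character e z * character e z' = character e (sym_diff z z')"
proof -
  from assms have "card (e \<inter> z) + card (e \<inter> z') = card (e \<inter> sym_diff z z') + 2 * card (e \<inter> z \<inter> z')"
    by (rule card_Int_sym_diff)
  hence "(-1::real) ^ (card (e \<inter> z) + card (e \<inter> z')) = (-1) ^ card (e \<inter> sym_diff z z')"
    by (simp add: power_add power_mult)
  thus ?thesis unfolding character_def by (simp add: power_add)
qed

lemma character_eq_dot: "character e z = (if dot e z then -1 else 1)"
  unfolding character_def dot_def by simp

lemma card_subsets_Int_eq:
  assumes x: "x \<subseteq> U" "finite U" and j: "j \<le> w"
  shows "card {e. e \<subseteq> U \<and> card e = w \<and> card (e \<inter> x) = j} =
    (card x choose j) * ((card U - card x) choose (w - j))"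
proof -
  have fx: "finite x" using x finite_subset by blast
  let ?S = "{e. e \<subseteq> U \<and> card e = w \<and> card (e \<inter> x) = j}"
  let ?T = "{A. A \<subseteq> x \<and> card A = j} \<times> {B. B \<subseteq> U - x \<and> card B = w - j}"
  have "bij_betw (\<lambda>e. (e \<inter> x, e - x)) ?S ?T"
  proof (rule bij_betw_byWitness[where f' = "\<lambda>(A, B). A \<union> B"])
    show "(\<lambda>e. (e \<inter> x, e - x)) ` ?S \<subseteq> ?T"
    proof (rule image_subsetI)
      fix e assume e: "e \<in> ?S"
      hence "finite e" using x finite_subset by blast
      hence "card (e - x) = card e - card (e \<inter> x)" by (simp add: card_Diff_subset_Int Diff_Int2)
      thus "(e \<inter> x, e - x) \<in> ?T" using e by auto
    qed
    show "(\<lambda>(A, B). A \<union> B) ` ?T \<subseteq> ?S"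
    proof (rule image_subsetI)
      fix p assume "p \<in> ?T"
      then obtain A B where p: "p = (A, B)" and A: "A \<subseteq> x" "card A = j"
        and B: "B \<subseteq> U - x" "card B = w - j" by auto
      have "finite A" "finite B" using A B fx x finite_subset by blast+
      hence "card (A \<union> B) = card A + card B" using A B by (intro card_Un_disjoint) auto
      moreover have "(A \<union> B) \<inter> x = A" using A B by auto
      ultimately show "(case p of (A, B) \<Rightarrow> A \<union> B) \<in> ?S" using A B j x p by auto
    qed
  qed auto
  hence "card ?S = card ?T" by (rule bij_betw_same_card)
  also have "\<dots> = (card x choose j) * ((card U - card x) choose (w - j))"
    using fx x by (simp add: card_cartesian_product n_subsets card_Diff_subset)
  finally show ?thesis .
qed

lemma sum_character_weight_eq_krawtchouk:
  assumes x: "x \<subseteq> {..<n}"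
  shows "(\<Sum>e\<in>{e\<in>vecs n. card e = w}. character e x) = real_of_int (krawtchouk n w (card x))"
proof -
  let ?S = "{e\<in>vecs n. card e = w}"
  have layer: "(\<lambda>e. card (e \<inter> x)) ` ?S \<subseteq> {0..w}"
    using finite_vec by (auto intro!: card_mono)
  have card_layer: "card {e \<in> vecs n. card e = w \<and> card (e \<inter> x) = j}
      = (card x choose j) * ((n - card x) choose (w - j))"
    if "j \<le> w" for j
  proof -
    have "{e \<in> vecs n. card e = w \<and> card (e \<inter> x) = j} = {e. e \<subseteq> {..<n} \<and> card e = w \<and> card (e \<inter> x) = j}"
      unfolding vecs_def by auto
    thus ?thesis using card_subsets_Int_eq[OF x _ that] by simp
  qed
  have "(\<Sum>e\<in>?S. character e x) = (\<Sum>j=0..w. \<Sum>e\<in>{e \<in> ?S. card (e \<inter> x) = j}. (-1::real) ^ card (e \<inter> x))"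
    unfolding character_def by (rule sum.group[symmetric]) (use layer in auto)
  also have "\<dots> = (\<Sum>j=0..w. (-1) ^ j * real (card {e \<in> ?S. card (e \<inter> x) = j}))"
  proof (intro sum.cong refl)
    fix j
    have "(\<Sum>e\<in>{e \<in> ?S. card (e \<inter> x) = j}. (-1::real) ^ card (e \<inter> x))
        = (\<Sum>e\<in>{e \<in> ?S. card (e \<inter> x) = j}. (-1) ^ j)"
      by (rule sum.cong) auto
    thus "(\<Sum>e\<in>{e \<in> ?S. card (e \<inter> x) = j}. (-1::real) ^ card (e \<inter> x))
        = (-1) ^ j * real (card {e \<in> ?S. card (e \<inter> x) = j})" by simp
  qed
  also have "\<dots> = (\<Sum>j=0..w. (-1) ^ j * real ((card x choose j) * ((n - card x) choose (w - j))))"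
    by (intro sum.cong refl) (simp add: card_layer)
  also have "\<dots> = real_of_int (krawtchouk n w (card x))"
    unfolding krawtchouk_def by (simp add: of_int_sum mult.assoc)
  finally show ?thesis .
qed

locale krawtchouk_bounded =
  fixes c Cst :: real
  assumes Cst_ge_1: "Cst \<ge> 1"
    and krawtchouk_le: "\<And>N w i. N \<ge> 1 \<Longrightarrow> real w \<le> c * real N \<Longrightarrow> real i \<le> real N / 2 \<Longrightarrow>
        \<bar>real_of_int (krawtchouk N w i)\<bar> \<le> Cst * real (N choose w) * (1 - 2 * real w / real N) ^ i"
begin

text \<open>For N/2 < w \<le> c N and i = 1 the right-hand side of the hypothesis would be negative.\<close>
lemma c_le_half: "c \<le> 1/2"
proof (rule ccontr)
  assume "\<not> c \<le> 1/2"
  define N where "N = nat \<lceil>1 / (c - 1/2)\<rceil> + 2"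
  define w where "w = N div 2 + 1"
  have N2: "N \<ge> 2" unfolding N_def by simp
  have "real N \<ge> 1 / (c - 1/2)" unfolding N_def by linarith
  hence "(c - 1/2) * real N \<ge> 1" using \<open>\<not> c \<le> 1/2\<close> by (simp add: field_simps)
  moreover have "real w \<le> real N / 2 + 1" unfolding w_def by linarith
  ultimately have wc: "real w \<le> c * real N" by (simp add: algebra_simps)
  have "w \<le> N" "N < 2 * w" unfolding w_def using N2 by (linarith, presburger)
  hence "real (N choose w) > 0" "1 - 2 * real w / real N < 0" using N2 by (simp_all add: field_simps)
  hence "Cst * real (N choose w) * (1 - 2 * real w / real N) ^ 1 < 0"
    using Cst_ge_1 by (simp add: mult_pos_neg)
  moreover have "\<bar>real_of_int (krawtchouk N w 1)\<bar> \<le> Cst * real (N choose w) * (1 - 2 * real w / real N) ^ 1"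
    using krawtchouk_le[OF _ wc, of 1] N2 by simp
  ultimately show False by simp
qed

text \<open>Complementing x multiplies every character of weight w by (-1)^w, so the hypothesis, which only
  covers |x| \<le> n/2, bounds the character sum for every x.\<close>
lemma sum_character_weight_bound:
  assumes n: "n \<ge> 1" and w: "real w \<le> c * real n" and x: "x \<in> vecs n"
  shows "\<bar>\<Sum>e\<in>{e\<in>vecs n. card e = w}. character e x\<bar>
    \<le> Cst * real (n choose w) * (1 - 2 * real w / real n) ^ min (card x) (n - card x)"
proof (cases "2 * card x \<le> n")
  case True
  hence "min (card x) (n - card x) = card x" "real (card x) \<le> real n / 2" by auto
  thus ?thesis using krawtchouk_le[OF n w] sum_character_weight_eq_krawtchouk[of x n w] x
    unfolding vecs_def by auto
next
  case False
  let ?y = "{..<n} - x"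
  have xs: "x \<subseteq> {..<n}" using x unfolding vecs_def by auto
  have cy: "card ?y = n - card x" using xs by (simp add: card_Diff_subset finite_subset)
  have "(\<Sum>e\<in>{e\<in>vecs n. card e = w}. character e x) = (-1)^w * (\<Sum>e\<in>{e\<in>vecs n. card e = w}. character e ?y)"
    unfolding sum_distrib_left
  proof (rule sum.cong[OF refl])
    fix e assume e: "e \<in> {e\<in>vecs n. card e = w}"
    have "sym_diff x ?y = {..<n}" using xs by auto
    hence "character e x * character e ?y = (-1)^w"
      using character_mult[OF finite_vec, of e n x ?y] e unfolding character_def vecs_def
      by (simp add: Int_absorb2)
    moreover have "character e ?y * character e ?y = 1"
      unfolding character_def by (simp add: power_mult_distrib[symmetric])
    ultimately show "character e x = (-1)^w * character e ?y" by (metis mult.assoc mult.right_neutral)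
  qed
  moreover have "min (card x) (n - card x) = card ?y" "real (card ?y) \<le> real n / 2" using False cy by auto
  ultimately show ?thesis
    using krawtchouk_le[OF n w] sum_character_weight_eq_krawtchouk[of ?y n w] by (auto simp: abs_mult)
qed

end

section \<open>Counting unbalanced vectors\<close>

lemma sum_vecs_power_card:
  fixes a b :: "'a :: comm_semiring_1"
  shows "(\<Sum>x\<in>vecs n. a ^ card x * b ^ (n - card x)) = (a + b) ^ n"
proof -
  have "(a + b) ^ n = (\<Prod>i<n. a + b)" by simp
  also have "\<dots> = (\<Sum>x\<in>vecs n. (\<Prod>i\<in>x. a) * (\<Prod>i\<in>{..<n} - x. b))"
    unfolding vecs_def by (rule prod_add) simp
  also have "\<dots> = (\<Sum>x\<in>vecs n. a ^ card x * b ^ (n - card x))"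
    unfolding vecs_def by (intro sum.cong) (auto simp: card_Diff_subset finite_subset)
  finally show ?thesis ..
qed

text \<open>Chernoff's trick: the indicator of \<phi> x < t is at most lam^(\<phi> x - t).\<close>
lemma card_less_le_powr_sum:
  fixes lam t :: real and \<phi> :: "'a \<Rightarrow> nat"
  assumes "finite V" "0 < lam" "lam \<le> 1"
  shows "real (card {x\<in>V. real (\<phi> x) < t}) \<le> lam powr (-t) * (\<Sum>x\<in>V. lam ^ \<phi> x)"
proof -
  have "real (card {x\<in>V. real (\<phi> x) < t}) = (\<Sum>x\<in>V. if real (\<phi> x) < t then 1 else 0)"
    using assms(1) by (simp add: sum.If_cases Int_def)
  also have "\<dots> \<le> (\<Sum>x\<in>V. lam powr (-t) * lam ^ \<phi> x)"
  proof (rule sum_mono)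
    fix x
    have eq: "lam powr (-t) * lam ^ \<phi> x = lam powr (real (\<phi> x) - t)"
      using assms by (simp add: powr_realpow[symmetric] powr_add[symmetric])
    have "real (\<phi> x) < t \<Longrightarrow> 1 \<le> lam powr (real (\<phi> x) - t)"
      using assms powr_mono'[of "real (\<phi> x) - t" 0 lam] by simp
    thus "(if real (\<phi> x) < t then 1 else 0) \<le> lam powr (-t) * lam ^ \<phi> x" unfolding eq by auto
  qed
  finally show ?thesis by (simp add: sum_distrib_left)
qed

lemma card_unbalanced_vecs_le:
  assumes "0 < lam" "lam \<le> 1"
  shows "real (card {x\<in>vecs n. real (min (card x) (n - card x)) < t}) \<le> 2 * (lam powr (-t) * (1 + lam) ^ n)"
proof -
  have "{x\<in>vecs n. real (min (card x) (n - card x)) < t}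
      \<subseteq> {x\<in>vecs n. real (card x) < t} \<union> {x\<in>vecs n. real (n - card x) < t}"
    by (auto simp: min_def)
  hence "card {x\<in>vecs n. real (min (card x) (n - card x)) < t}
      \<le> card ({x\<in>vecs n. real (card x) < t} \<union> {x\<in>vecs n. real (n - card x) < t})"
    by (intro card_mono) auto
  also have "\<dots> \<le> card {x\<in>vecs n. real (card x) < t} + card {x\<in>vecs n. real (n - card x) < t}"
    by (rule card_Un_le)
  finally have "card {x\<in>vecs n. real (min (card x) (n - card x)) < t}
      \<le> card {x\<in>vecs n. real (card x) < t} + card {x\<in>vecs n. real (n - card x) < t}" .
  moreover have "real (card {x\<in>vecs n. real (card x) < t}) \<le> lam powr (-t) * (1 + lam) ^ n"
    using card_less_le_powr_sum[OF finite_vecs[of n] assms, where \<phi> = card and t = t] sum_vecs_power_card[of lam 1 n]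
    by (simp add: add.commute)
  moreover have "real (card {x\<in>vecs n. real (n - card x) < t}) \<le> lam powr (-t) * (1 + lam) ^ n"
    using card_less_le_powr_sum[OF finite_vecs[of n] assms, where \<phi> = "\<lambda>x. n - card x" and t = t] sum_vecs_power_card[of 1 lam n]
    by simp
  ultimately show ?thesis by linarith
qed

section \<open>The second moment of the bias\<close>

definition tv_to_uniform :: "nat \<Rightarrow> (nat \<Rightarrow> nat set) \<Rightarrow> nat set pmf \<Rightarrow> real" where
  "tv_to_uniform k G P = tv_dist (vecs k) (map_pmf (mat_vec k G) P) (uniform_vec k)"

lemma tv_to_uniform_eq:
  "2 * tv_to_uniform k G P = (\<Sum>s\<in>vecs k. \<bar>pmf (map_pmf (mat_vec k G) P) s - 1 / 2 ^ k\<bar>)"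
proof -
  have "vecs k \<noteq> {}" unfolding vecs_def by auto
  hence "pmf (uniform_vec k) s = 1 / 2 ^ k" if "s \<in> vecs k" for s
    unfolding uniform_vec_def using that by (simp add: card_vecs)
  thus ?thesis unfolding tv_to_uniform_def tv_dist_def by (simp cong: sum.cong)
qed

lemma tv_to_uniform_nonneg: "0 \<le> tv_to_uniform k G P"
  unfolding tv_to_uniform_def tv_dist_def by (simp add: sum_nonneg)

lemma bias_lin_eq_sum_character:
  assumes P: "set_pmf P \<subseteq> vecs n"
  shows "2 * bias_lin e P = (\<Sum>z\<in>vecs n. pmf P z * character e z)"
proof -
  have "{z. dot e z} \<inter> set_pmf P = {z \<in> vecs n. dot e z} \<inter> set_pmf P" using P by auto
  hence "measure_pmf.prob P {z. dot e z} = measure_pmf.prob P {z \<in> vecs n. dot e z}"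
    by (metis measure_Int_set_pmf)
  also have "\<dots> = (\<Sum>z\<in>vecs n. if dot e z then pmf P z else 0)"
    by (simp add: measure_measure_pmf_finite sum.inter_filter)
  finally have prob: "measure_pmf.prob P {z. dot e z} = (\<Sum>z\<in>vecs n. if dot e z then pmf P z else 0)" .
  have "pmf P z * character e z = pmf P z - 2 * (if dot e z then pmf P z else 0)" for z
    by (simp add: character_eq_dot)
  thus ?thesis unfolding bias_lin_def prob using sum_pmf_eq_1[OF finite_vecs P]
    by (simp add: sum_subtractf sum_distrib_left)
qed

lemma pmf_le_pmf_map_pmf: "pmf P y \<le> pmf (map_pmf f P) (f y)"
proof -
  have "pmf P y = measure_pmf.prob P {y}" by (simp add: measure_pmf_single)
  also have "\<dots> \<le> measure_pmf.prob P (f -` {f y})" by (rule measure_pmf.finite_measure_mono) auto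
  finally show ?thesis by (simp add: pmf_map)
qed

lemma sum_vecs_shift: "z \<in> vecs n \<Longrightarrow> (\<Sum>x\<in>vecs n. f (sym_diff z x)) = (\<Sum>x\<in>vecs n. f x)"
  by (rule sum.reindex_bij_witness[where i = "sym_diff z" and j = "sym_diff z"]) (auto simp: sym_diff_vecs)

lemma sum_power_le_card_powr:
  fixes \<phi> :: "'a \<Rightarrow> nat"
  assumes V: "finite V" "B \<subseteq> V" and \<rho>: "0 < \<rho>" "\<rho> \<le> 1"
  shows "(\<Sum>x\<in>B. \<rho> ^ \<phi> x) \<le> card B * \<rho> powr t + card {x\<in>V. real (\<phi> x) < t}"
proof -
  have "(\<Sum>x\<in>B. \<rho> ^ \<phi> x) \<le> (\<Sum>x\<in>B. \<rho> powr t + (if real (\<phi> x) < t then 1 else 0))"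
  proof (rule sum_mono)
    fix x
    show "\<rho> ^ \<phi> x \<le> \<rho> powr t + (if real (\<phi> x) < t then 1 else 0)"
    proof (cases "real (\<phi> x) < t")
      case False
      hence "\<rho> powr real (\<phi> x) \<le> \<rho> powr t" using \<rho> by (intro powr_mono') auto
      thus ?thesis using False \<rho> by (simp add: powr_realpow)
    qed (use \<rho> in \<open>simp add: power_le_one add_increasing\<close>)
  qed
  also have "\<dots> = card B * \<rho> powr t + card {x\<in>B. real (\<phi> x) < t}"
    using finite_subset[OF V(2,1)] by (simp add: sum.distrib sum.If_cases Int_def)
  also have "card {x\<in>B. real (\<phi> x) < t} \<le> card {x\<in>V. real (\<phi> x) < t}"
    using V by (intro card_mono) auto
  finally show ?thesis by simp
qed

text \<open>Each mass f x is at most the uniform mass 2^-k plus the deviation at h x. The uniform parts are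
  summed over at most 2^k points, each contributing at most \<rho>^t unless \<phi> x < t.\<close>
lemma sum_injective_mass_le:
  fixes h :: "'a \<Rightarrow> nat set" and f :: "'a \<Rightarrow> real" and Q :: "nat set \<Rightarrow> real" and \<phi> :: "'a \<Rightarrow> nat"
  assumes V: "finite V" "B \<subseteq> V" and inj: "inj_on h B" and hB: "h ` B \<subseteq> vecs k"
    and f: "\<And>x. x \<in> B \<Longrightarrow> 0 \<le> f x \<and> f x \<le> Q (h x)" and \<rho>: "0 < \<rho>" "\<rho> \<le> 1"
  shows "(\<Sum>x\<in>B. f x * \<rho> ^ \<phi> x)
    \<le> \<rho> powr t + card {x\<in>V. real (\<phi> x) < t} / 2 ^ k + (\<Sum>s\<in>vecs k. \<bar>Q s - 1 / 2 ^ k\<bar>)"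
proof -
  let ?u = "1 / 2 ^ k :: real"
  have "card B \<le> 2 ^ k"
    using card_image[OF inj] card_mono[OF finite_vecs hB] by (simp add: card_vecs)
  hence card_B: "real (card B) \<le> 2 ^ k" by (metis of_nat_le_iff of_nat_numeral of_nat_power)
  have "(\<Sum>x\<in>B. f x * \<rho> ^ \<phi> x) \<le> (\<Sum>x\<in>B. ?u * \<rho> ^ \<phi> x + \<bar>Q (h x) - ?u\<bar>)"
  proof (rule sum_mono)
    fix x assume x: "x \<in> B"
    have p: "0 \<le> \<rho> ^ \<phi> x" "\<rho> ^ \<phi> x \<le> 1" using \<rho> by (auto simp: power_le_one)
    have "f x * \<rho> ^ \<phi> x \<le> (?u + \<bar>Q (h x) - ?u\<bar>) * \<rho> ^ \<phi> x"
      using f[OF x] p by (intro mult_right_mono) auto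
    also have "\<dots> \<le> ?u * \<rho> ^ \<phi> x + \<bar>Q (h x) - ?u\<bar>" using p by (simp add: distrib_right mult_left_le)
    finally show "f x * \<rho> ^ \<phi> x \<le> ?u * \<rho> ^ \<phi> x + \<bar>Q (h x) - ?u\<bar>" .
  qed
  also have "\<dots> = ?u * (\<Sum>x\<in>B. \<rho> ^ \<phi> x) + (\<Sum>s\<in>h ` B. \<bar>Q s - ?u\<bar>)"
    by (simp add: sum.distrib sum_distrib_left sum.reindex[OF inj])
  finally have split:
    "(\<Sum>x\<in>B. f x * \<rho> ^ \<phi> x) \<le> ?u * (\<Sum>x\<in>B. \<rho> ^ \<phi> x) + (\<Sum>s\<in>h ` B. \<bar>Q s - ?u\<bar>)" .
  have "(\<Sum>s\<in>h ` B. \<bar>Q s - ?u\<bar>) \<le> (\<Sum>s\<in>vecs k. \<bar>Q s - ?u\<bar>)"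
    by (rule sum_mono2[OF finite_vecs hB]) auto
  moreover have "(\<Sum>x\<in>B. \<rho> ^ \<phi> x) \<le> card B * \<rho> powr t + card {x\<in>V. real (\<phi> x) < t}"
    by (rule sum_power_le_card_powr[OF V \<rho>])
  moreover have "card B * \<rho> powr t \<le> 2 ^ k * \<rho> powr t" using card_B by (intro mult_right_mono) auto
  ultimately have "(\<Sum>x\<in>B. \<rho> ^ \<phi> x) \<le> 2 ^ k * \<rho> powr t + card {x\<in>V. real (\<phi> x) < t}"
    by linarith
  hence "?u * (\<Sum>x\<in>B. \<rho> ^ \<phi> x) \<le> ?u * (2 ^ k * \<rho> powr t + card {x\<in>V. real (\<phi> x) < t})"
    by (intro mult_left_mono) simp_all
  also have "\<dots> = \<rho> powr t + card {x\<in>V. real (\<phi> x) < t} / 2 ^ k" by (simp add: field_simps)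
  finally show ?thesis using split \<open>(\<Sum>s\<in>h ` B. \<bar>Q s - ?u\<bar>) \<le> _\<close> by linarith
qed

text \<open>Two points closer than d/2 to the common centre c differ in fewer than d positions, so
  x \<mapsto> G (z + x) is injective on them.\<close>
lemma sum_shifted_mass_near_le:
  assumes rows: "\<forall>r<k. G r \<in> vecs n" and d: "d \<le> min_dist (dual_code n (lin_code n k G))"
    and z: "z \<in> vecs n" and c: "c \<in> vecs n" and \<rho>: "0 < \<rho>" "\<rho> \<le> 1"
  shows "(\<Sum>x\<in>{x\<in>vecs n. 2 * card (sym_diff c x) < d}. pmf P (sym_diff z x) * \<rho> ^ \<phi> x)
    \<le> \<rho> powr t + card {x\<in>vecs n. real (\<phi> x) < t} / 2 ^ k + 2 * tv_to_uniform k G P"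
proof -
  define h where "h x = mat_vec k G (sym_diff z x)" for x
  let ?B = "{x\<in>vecs n. 2 * card (sym_diff c x) < d}"
  have "inj_on h ?B"
  proof (rule inj_onI, rule ccontr)
    fix x y assume x: "x \<in> ?B" and y: "y \<in> ?B" and "h x = h y" "x \<noteq> y"
    have shifted: "sym_diff z x \<in> vecs n" "sym_diff z y \<in> vecs n" using z x y by (simp_all add: sym_diff_vecs)
    have "sym_diff z x \<noteq> sym_diff z y" using \<open>x \<noteq> y\<close> sym_diff_cancel_left by metis
    hence "min_dist (dual_code n (lin_code n k G)) \<le> card (sym_diff (sym_diff z x) (sym_diff z y))"
      using min_dist_dual_le_card_sym_diff[OF rows shifted] \<open>h x = h y\<close> unfolding h_def by blast
    hence "d \<le> card (sym_diff (sym_diff c x) (sym_diff c y))" using d by (simp add: sym_diff_sym_diff_cancel)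
    also have "\<dots> \<le> card (sym_diff c x) + card (sym_diff c y)"
      using finite_vec c x y by (intro card_sym_diff_le) auto
    finally show False using x y by auto
  qed
  moreover have "h ` ?B \<subseteq> vecs k" unfolding h_def mat_vec_def vecs_def by auto
  moreover have "0 \<le> pmf P (sym_diff z x) \<and> pmf P (sym_diff z x) \<le> pmf (map_pmf (mat_vec k G) P) (h x)" for x
    unfolding h_def using pmf_le_pmf_map_pmf by auto
  ultimately show ?thesis
    unfolding tv_to_uniform_eq by (intro sum_injective_mass_le[OF finite_vecs _ _ _ _ \<rho>]) auto
qed

text \<open>Split x according to whether it is close to the zero vector, close to the all-ones vector, or
  far from both; in the last case its weight is at most \<rho>^(d div 2).\<close>
lemma sum_shifted_mass_le:
  assumes P: "set_pmf P \<subseteq> vecs n"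
    and rows: "\<forall>r<k. G r \<in> vecs n" and d: "d \<le> min_dist (dual_code n (lin_code n k G))"
    and z: "z \<in> vecs n" and \<rho>: "0 < \<rho>" "\<rho> \<le> 1"
  shows "(\<Sum>x\<in>vecs n. pmf P (sym_diff z x) * \<rho> ^ min (card x) (n - card x))
    \<le> \<rho> ^ (d div 2) + 2 * (\<rho> powr t + card {x\<in>vecs n. real (min (card x) (n - card x)) < t} / 2 ^ k
        + 2 * tv_to_uniform k G P)"
proof -
  let ?m = "\<lambda>x. min (card x) (n - card x)"
  let ?f = "\<lambda>x. pmf P (sym_diff z x) * \<rho> ^ ?m x"
  define B0 where "B0 = {x\<in>vecs n. 2 * card (sym_diff {} x) < d}"
  define B1 where "B1 = {x\<in>vecs n. 2 * card (sym_diff {..<n} x) < d}"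
  define bnd where "bnd = \<rho> powr t + card {x\<in>vecs n. real (?m x) < t} / 2 ^ k + 2 * tv_to_uniform k G P"
  have "?f x \<le> (if x \<in> B0 then ?f x else 0) + (if x \<in> B1 then ?f x else 0)
      + pmf P (sym_diff z x) * \<rho> ^ (d div 2)" if x: "x \<in> vecs n" for x
  proof (cases "x \<in> B0 \<or> x \<in> B1")
    case False
    hence "d div 2 \<le> ?m x" using x card_sym_diff_lessThan[OF x] unfolding B0_def B1_def by auto
    hence "\<rho> ^ ?m x \<le> \<rho> ^ (d div 2)" using \<rho> by (intro power_decreasing) auto
    thus ?thesis using False by (auto intro: mult_left_mono)
  qed (use \<rho> in auto)
  hence "(\<Sum>x\<in>vecs n. ?f x) \<le> (\<Sum>x\<in>vecs n. (if x \<in> B0 then ?f x else 0)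
      + (if x \<in> B1 then ?f x else 0) + pmf P (sym_diff z x) * \<rho> ^ (d div 2))"
    by (rule sum_mono)
  also have "\<dots> = (\<Sum>x\<in>B0. ?f x) + (\<Sum>x\<in>B1. ?f x) + \<rho> ^ (d div 2)"
  proof -
    have "vecs n \<inter> B0 = B0" "vecs n \<inter> B1 = B1" unfolding B0_def B1_def by auto
    moreover have "(\<Sum>x\<in>vecs n. pmf P (sym_diff z x)) = 1"
      using sum_vecs_shift[OF z, of "pmf P"] sum_pmf_eq_1[OF finite_vecs P] by simp
    ultimately show ?thesis
      by (simp add: sum.distrib sum_distrib_right[symmetric] sum.inter_restrict[symmetric])
  qed
  finally have "(\<Sum>x\<in>vecs n. ?f x) \<le> (\<Sum>x\<in>B0. ?f x) + (\<Sum>x\<in>B1. ?f x) + \<rho> ^ (d div 2)" .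
  moreover have "(\<Sum>x\<in>B0. ?f x) \<le> bnd"
    unfolding B0_def bnd_def
    using sum_shifted_mass_near_le[where c = "{}" and P = P and \<phi> = ?m and t = t, OF rows d z _ \<rho>]
    by (simp add: vecs_def)
  moreover have "(\<Sum>x\<in>B1. ?f x) \<le> bnd"
    unfolding B1_def bnd_def
    using sum_shifted_mass_near_le[where c = "{..<n}" and P = P and \<phi> = ?m and t = t, OF rows d z _ \<rho>]
    by (simp add: vecs_def)
  ultimately show ?thesis unfolding bnd_def[symmetric] by linarith
qed

lemma sum_bias_sq_eq:
  assumes P: "set_pmf P \<subseteq> vecs n" and S: "S \<subseteq> vecs n"
  shows "(\<Sum>e\<in>S. (2 * bias_lin e P)\<^sup>2)
    = (\<Sum>z\<in>vecs n. pmf P z * (\<Sum>x\<in>vecs n. pmf P (sym_diff z x) * (\<Sum>e\<in>S. character e x)))"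
proof -
  have "(2 * bias_lin e P)\<^sup>2 = (\<Sum>z\<in>vecs n. \<Sum>z'\<in>vecs n. pmf P z * pmf P z' * character e (sym_diff z z'))"
    if "e \<in> S" for e
  proof -
    have "finite e" using finite_vec S that by blast
    thus ?thesis unfolding bias_lin_eq_sum_character[OF P] power2_eq_square sum_product
      by (simp add: character_mult[symmetric] mult_ac)
  qed
  hence "(\<Sum>e\<in>S. (2 * bias_lin e P)\<^sup>2)
      = (\<Sum>z\<in>vecs n. \<Sum>z'\<in>vecs n. pmf P z * pmf P z' * (\<Sum>e\<in>S. character e (sym_diff z z')))"
    by (simp add: sum.swap[of _ S] sum_distrib_left)
  also have "\<dots> = (\<Sum>z\<in>vecs n. pmf P z * (\<Sum>x\<in>vecs n. pmf P (sym_diff z x) * (\<Sum>e\<in>S. character e x)))"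
  proof (intro sum.cong refl)
    fix z assume z: "z \<in> vecs n"
    show "(\<Sum>z'\<in>vecs n. pmf P z * pmf P z' * (\<Sum>e\<in>S. character e (sym_diff z z')))
        = pmf P z * (\<Sum>x\<in>vecs n. pmf P (sym_diff z x) * (\<Sum>e\<in>S. character e x))"
      using sum_vecs_shift[OF z, of "\<lambda>z'. pmf P z' * (\<Sum>e\<in>S. character e (sym_diff z z'))"]
      by (simp add: sum_distrib_left mult.assoc)
  qed
  finally show ?thesis .
qed

lemma ex_le_of_sum_le:
  fixes f :: "'a \<Rightarrow> real"
  assumes "finite A" "A \<noteq> {}" "sum f A \<le> real (card A) * b"
  shows "\<exists>x\<in>A. f x \<le> b"
proof (rule ccontr)
  assume "\<not> (\<exists>x\<in>A. f x \<le> b)"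
  hence "(\<Sum>x\<in>A. b) < sum f A" using assms(1,2) by (intro sum_strict_mono) auto
  thus False using assms(3) by simp
qed

context krawtchouk_bounded
begin

lemma sum_bias_sq_le:
  assumes P: "set_pmf P \<subseteq> vecs n" and n: "n \<ge> 1" and w: "real w \<le> c * real n"
  shows "(\<Sum>e\<in>{e\<in>vecs n. card e = w}. (2 * bias_lin e P)\<^sup>2)
    \<le> (\<Sum>z\<in>vecs n. pmf P z * (Cst * real (n choose w)
        * (\<Sum>x\<in>vecs n. pmf P (sym_diff z x) * (1 - 2 * real w / real n) ^ min (card x) (n - card x))))"
    (is "_ \<le> (\<Sum>z\<in>vecs n. pmf P z * (?C * (\<Sum>x\<in>vecs n. pmf P (sym_diff z x) * ?g x)))")
proof -
  let ?S = "{e\<in>vecs n. card e = w}"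
  have "(\<Sum>e\<in>?S. (2 * bias_lin e P)\<^sup>2)
      = (\<Sum>z\<in>vecs n. pmf P z * (\<Sum>x\<in>vecs n. pmf P (sym_diff z x) * (\<Sum>e\<in>?S. character e x)))"
    by (rule sum_bias_sq_eq[OF P]) auto
  also have "\<dots> \<le> (\<Sum>z\<in>vecs n. pmf P z * (\<Sum>x\<in>vecs n. pmf P (sym_diff z x) * (?C * ?g x)))"
    using abs_le_D1[OF sum_character_weight_bound[OF n w]]
    by (intro sum_mono mult_left_mono) auto
  also have "\<dots> = (\<Sum>z\<in>vecs n. pmf P z * (?C * (\<Sum>x\<in>vecs n. pmf P (sym_diff z x) * ?g x)))"
    by (simp add: sum_distrib_left mult_ac)
  finally show ?thesis .
qed

lemma exists_weight_vector_bias_sq_le: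
  assumes P: "set_pmf P \<subseteq> vecs n"
    and rows: "\<forall>r<k. G r \<in> vecs n" and d: "d \<le> min_dist (dual_code n (lin_code n k G))"
    and n: "n \<ge> 1" and w: "real w \<le> c * real n"
    and \<rho>: "\<rho> = 1 - 2 * real w / real n" "0 < \<rho>" and lam: "0 < lam" "lam \<le> 1"
  shows "\<exists>e\<in>{e\<in>vecs n. card e = w}. (2 * bias_lin e P)\<^sup>2 \<le> Cst * (\<rho> ^ (d div 2) + 2 * \<rho> powr t
    + 4 * (lam powr (-t) * (1 + lam) ^ n / 2 ^ k) + 4 * tv_to_uniform k G P)"
proof -
  let ?S = "{e\<in>vecs n. card e = w}"
  let ?m = "\<lambda>x. min (card x) (n - card x)"
  define bound where "bound = \<rho> ^ (d div 2) + 2 * \<rho> powr t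
    + 4 * (lam powr (-t) * (1 + lam) ^ n / 2 ^ k) + 4 * tv_to_uniform k G P"
  have \<rho>_le_1: "\<rho> \<le> 1" using \<rho>(1) by simp
  have "c * real n \<le> 1/2 * real n" using c_le_half by (intro mult_right_mono) auto
  hence "real w \<le> real n" using w by linarith
  hence card_S: "card ?S = n choose w" "n choose w > 0"
    using n_subsets[of "{..<n}" w] unfolding vecs_def by (simp_all add: conj_commute)
  have shifted: "(\<Sum>x\<in>vecs n. pmf P (sym_diff z x) * \<rho> ^ ?m x) \<le> bound" if "z \<in> vecs n" for z
  proof -
    have "card {x\<in>vecs n. real (?m x) < t} / 2 ^ k \<le> 2 * (lam powr (-t) * (1 + lam) ^ n) / 2 ^ k"
      using card_unbalanced_vecs_le[OF lam] by (intro divide_right_mono) auto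
    thus ?thesis using sum_shifted_mass_le[where k = k and G = G and t = t, OF P rows d that \<rho>(2) \<rho>_le_1]
      unfolding bound_def by (simp add: field_simps)
  qed
  have "(\<Sum>e\<in>?S. (2 * bias_lin e P)\<^sup>2)
      \<le> (\<Sum>z\<in>vecs n. pmf P z * (Cst * real (n choose w) * (\<Sum>x\<in>vecs n. pmf P (sym_diff z x) * \<rho> ^ ?m x)))"
    unfolding \<rho>(1) by (rule sum_bias_sq_le[OF P n w])
  also have "\<dots> \<le> (\<Sum>z\<in>vecs n. pmf P z * (Cst * real (n choose w) * bound))"
    using shifted Cst_ge_1 by (intro sum_mono mult_left_mono) auto
  also have "\<dots> = real (card ?S) * (Cst * bound)"
    using sum_pmf_eq_1[OF finite_vecs P] card_S by (simp add: sum_distrib_right[symmetric])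
  finally have "(\<Sum>e\<in>?S. (2 * bias_lin e P)\<^sup>2) \<le> real (card ?S) * (Cst * bound)" .
  moreover have "finite ?S" "?S \<noteq> {}" using card_S by (auto simp del: Collect_empty_eq)
  ultimately show ?thesis unfolding bound_def
    using ex_le_of_sum_le[of ?S "\<lambda>e. (2 * bias_lin e P)\<^sup>2"] by blast
qed

end

section \<open>Exponential decay of the error terms\<close>

lemma power_div_two_le_powr:
  fixes \<rho> \<rho>1 \<delta> :: real and d N K :: nat
  assumes \<rho>: "0 < \<rho>" "\<rho> \<le> \<rho>1" "\<rho>1 < 1" and \<delta>: "0 \<le> \<delta>" "\<delta> / 2 * real N \<le> real d" and K: "K \<le> N"
  shows "\<rho> ^ (d div 2) \<le> (\<rho>1 powr (\<delta> / 4)) powr real K / \<rho>1"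
proof -
  have q: "0 < \<rho>1 powr (\<delta> / 4)" "\<rho>1 powr (\<delta> / 4) \<le> 1" using \<rho> \<delta> by (auto intro: powr_le1)
  have "\<rho> ^ (d div 2) \<le> \<rho>1 ^ (d div 2)" using \<rho> by (intro power_mono) auto
  also have "\<dots> = \<rho>1 powr real (d div 2)" using \<rho> by (simp add: powr_realpow)
  also have "\<dots> \<le> \<rho>1 powr (\<delta> / 4 * real N - 1)"
  proof (rule powr_mono')
    have "real d \<le> 2 * real (d div 2) + 1" by linarith
    thus "\<delta> / 4 * real N - 1 \<le> real (d div 2)" using \<delta> by linarith
  qed (use \<rho> in auto)
  also have "\<dots> = (\<rho>1 powr (\<delta> / 4)) powr real N / \<rho>1" using \<rho> by (simp add: powr_diff powr_powr mult.commute)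
  also have "\<dots> \<le> (\<rho>1 powr (\<delta> / 4)) powr real K / \<rho>1"
    using q \<rho> K by (intro divide_right_mono powr_mono') auto
  finally show ?thesis .
qed

lemma powr_mult_le_powr:
  fixes \<rho> \<rho>1 \<epsilon> :: real and N K :: nat
  assumes \<rho>: "0 < \<rho>" "\<rho> \<le> \<rho>1" "\<rho>1 < 1" and \<epsilon>: "0 \<le> \<epsilon>" and K: "K \<le> N"
  shows "\<rho> powr (\<epsilon> * real N) \<le> (\<rho>1 powr \<epsilon>) powr real K"
proof -
  have q: "0 < \<rho>1 powr \<epsilon>" "\<rho>1 powr \<epsilon> \<le> 1" using \<rho> \<epsilon> by (auto intro: powr_le1)
  have "\<rho> powr (\<epsilon> * real N) \<le> \<rho>1 powr (\<epsilon> * real N)" using \<rho> \<epsilon> by (intro powr_mono2) auto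
  also have "\<dots> = (\<rho>1 powr \<epsilon>) powr real N" by (simp add: powr_powr)
  also have "\<dots> \<le> (\<rho>1 powr \<epsilon>) powr real K" using q K by (intro powr_mono') auto
  finally show ?thesis .
qed

lemma powr_mult_power_div_le_powr:
  fixes lam \<epsilon> R :: real and N K :: nat
  assumes lam: "0 < lam" "lam powr (-\<epsilon>) * (1 + lam) \<le> 2 powr (R / 2)"
    and K: "3 * R / 4 * real N \<le> real K" "K \<le> N" and R: "R \<le> 1"
  shows "lam powr (- (\<epsilon> * real N)) * (1 + lam) ^ N / 2 ^ K \<le> (2 powr (- R / 4)) powr real K"
proof -
  have "lam powr (- (\<epsilon> * real N)) * (1 + lam) ^ N = (lam powr (-\<epsilon>) * (1 + lam)) powr real N"
    using lam by (simp add: powr_mult powr_powr powr_realpow)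
  also have "\<dots> \<le> (2 powr (R / 2)) powr real N" using lam by (intro powr_mono2) auto
  finally have "lam powr (- (\<epsilon> * real N)) * (1 + lam) ^ N / 2 ^ K \<le> 2 powr (R / 2 * real N - real K)"
    by (simp add: powr_powr powr_diff powr_realpow divide_right_mono)
  also have "\<dots> \<le> 2 powr (- R / 4 * real K)"
  proof (rule powr_mono)
    have "R * real K \<le> real K" using R mult_right_mono[of R 1 "real K"] by simp
    thus "R / 2 * real N - real K \<le> - R / 4 * real K" using K by linarith
  qed simp
  also have "\<dots> = (2 powr (- R / 4)) powr real K" by (simp add: powr_powr)
  finally show ?thesis .
qed

lemma exists_chernoff_parameters:
  fixes s :: real
  assumes s: "0 < s" "s < 2"
  shows "\<exists>lam \<epsilon>. 0 < lam \<and> lam \<le> 1 \<and> 0 < \<epsilon> \<and> lam powr (-\<epsilon>) * (1 + lam) \<le> 2 powr s"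
proof -
  define lam where "lam = 2 powr (s / 2) - 1"
  have "2 powr 0 < 2 powr (s / 2)" "2 powr (s / 2) < 2 powr 1" using s by (intro powr_less_mono; simp)+
  hence lam: "0 < lam" "lam < 1" unfolding lam_def by auto
  define \<epsilon> where "\<epsilon> = s / 2 * ln 2 / - ln lam"
  have "0 < \<epsilon>" unfolding \<epsilon>_def using lam s by (intro divide_pos_pos) auto
  moreover have "lam powr (-\<epsilon>) = 2 powr (s / 2)"
    using lam unfolding \<epsilon>_def by (simp add: powr_def field_simps)
  hence "lam powr (-\<epsilon>) * (1 + lam) = 2 powr s" unfolding lam_def by (simp add: powr_add[symmetric])
  ultimately show ?thesis using lam by (intro exI[of _ lam] exI[of _ \<epsilon>]) auto
qed

section \<open>Sequences of codes\<close>

lemma negl_abs_of_sq_le: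
  fixes k :: "nat \<Rightarrow> nat" and b f :: "nat \<Rightarrow> real" and M \<gamma> :: real
  assumes k: "filterlim k at_top sequentially"
    and bound: "eventually (\<lambda>j. (b j)\<^sup>2 \<le> M * (f j + \<gamma> powr real (k j))) sequentially"
    and \<gamma>: "0 < \<gamma>" "\<gamma> < 1" and M: "0 \<le> M" and f: "negl k f"
  shows "negl k (\<lambda>j. \<bar>b j\<bar>)"
  unfolding negl_def
proof (intro allI impI)
  fix a :: real assume a: "a > 0"
  have kr: "filterlim (\<lambda>j. real (k j)) at_top sequentially"
    using k filterlim_compose filterlim_real_sequentially by blast
  have f_o: "f \<in> o(\<lambda>j. real (k j) powr (- (2 * a)))" using f a unfolding negl_def by auto
  have "(\<lambda>x::real. \<gamma> powr x) \<in> o(\<lambda>x. x powr (- (2 * a)))" using \<gamma> a by real_asymp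
  from landau_o.small.compose[OF this kr]
  have \<gamma>_o: "(\<lambda>j. \<gamma> powr real (k j)) \<in> o(\<lambda>j. real (k j) powr (- (2 * a)))" .
  show "(\<lambda>j. \<bar>b j\<bar>) \<in> o(\<lambda>j. real (k j) powr - a)"
  proof (rule landau_o.smallI)
    fix C :: real assume C: "C > 0"
    define \<epsilon> where "\<epsilon> = C\<^sup>2 / (2 * M + 2)"
    have \<epsilon>: "\<epsilon> > 0" "M * (2 * \<epsilon>) \<le> C\<^sup>2" unfolding \<epsilon>_def using M C by (auto simp: field_simps)
    have "eventually (\<lambda>j. real (k j) > 0) sequentially" using kr unfolding filterlim_at_top_dense by blast
    thus "eventually (\<lambda>j. norm \<bar>b j\<bar> \<le> C * norm (real (k j) powr - a)) sequentially"
      using landau_o.smallD[OF f_o \<epsilon>(1)] landau_o.smallD[OF \<gamma>_o \<epsilon>(1)] bound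
    proof eventually_elim
      case (elim j)
      let ?K = "real (k j)"
      have "f j \<le> \<epsilon> * ?K powr (- (2 * a))" "\<gamma> powr ?K \<le> \<epsilon> * ?K powr (- (2 * a))"
        using elim(2,3) by simp_all
      hence "M * (f j + \<gamma> powr ?K) \<le> M * (\<epsilon> * ?K powr (- (2 * a)) + \<epsilon> * ?K powr (- (2 * a)))"
        using M by (intro mult_left_mono) auto
      hence "(b j)\<^sup>2 \<le> M * (\<epsilon> * ?K powr (- (2 * a)) + \<epsilon> * ?K powr (- (2 * a)))"
        using elim(4) by linarith
      also have "\<dots> = (M * (2 * \<epsilon>)) * ?K powr (- (2 * a))" by (simp add: algebra_simps)
      also have "\<dots> \<le> C\<^sup>2 * ?K powr (- (2 * a))" using \<epsilon> by (intro mult_right_mono) auto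
      also have "\<dots> = (C * ?K powr - a)\<^sup>2" using elim(1) by (simp add: powr_power power_mult_distrib)
      finally have "(b j)\<^sup>2 \<le> (C * ?K powr - a)\<^sup>2" .
      moreover have "0 \<le> C * ?K powr - a" using C by simp
      ultimately have "\<bar>b j\<bar> \<le> C * ?K powr - a" using abs_le_square_iff[of "b j" "C * ?K powr - a"] by simp
      thus ?case by simp
    qed
  qed
qed

lemma exp_small_abs_of_sq_le:
  fixes k :: "nat \<Rightarrow> nat" and b f :: "nat \<Rightarrow> real" and M \<gamma> :: real
  assumes k: "filterlim k at_top sequentially"
    and bound: "eventually (\<lambda>j. (b j)\<^sup>2 \<le> M * (f j + \<gamma> powr real (k j))) sequentially"
    and \<gamma>: "0 < \<gamma>" "\<gamma> < 1" and M: "0 \<le> M" and f: "exp_small k f"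
  shows "exp_small k (\<lambda>j. \<bar>b j\<bar>)"
proof -
  obtain \<beta>f where \<beta>f: "\<beta>f > 0" "eventually (\<lambda>j. f j \<le> 2 powr (- \<beta>f * real (k j))) sequentially"
    using f unfolding exp_small_def by auto
  define \<beta> where "\<beta> = min \<beta>f (- log 2 \<gamma>)"
  have \<beta>: "\<beta> > 0" "\<beta> \<le> \<beta>f" using \<beta>f \<gamma> unfolding \<beta>_def by auto
  have \<gamma>_le: "\<gamma> powr x \<le> 2 powr (- \<beta> * x)" if "0 \<le> x" for x
  proof -
    have "\<gamma> powr x = 2 powr (log 2 \<gamma> * x)" using \<gamma> by (simp add: powr_powr[symmetric])
    also have "\<dots> \<le> 2 powr (- \<beta> * x)" using that unfolding \<beta>_def by (intro powr_mono mult_right_mono) auto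
    finally show ?thesis .
  qed
  have "filterlim (\<lambda>x::real. 2 powr (\<beta> / 2 * x)) at_top at_top" using \<beta> by real_asymp
  from filterlim_compose[OF this filterlim_compose[OF filterlim_real_sequentially k]]
  have "eventually (\<lambda>j. 2 * M + 1 \<le> 2 powr (\<beta> / 2 * real (k j))) sequentially"
    by (simp add: filterlim_at_top)
  hence "eventually (\<lambda>j. \<bar>b j\<bar> \<le> 2 powr (- (\<beta> / 4) * real (k j))) sequentially"
    using bound \<beta>f(2)
  proof eventually_elim
    case (elim j)
    let ?K = "real (k j)"
    have "2 powr (- \<beta>f * ?K) \<le> 2 powr (- \<beta> * ?K)" using \<beta> by (intro powr_mono mult_right_mono) auto
    hence "f j + \<gamma> powr ?K \<le> 2 * 2 powr (- \<beta> * ?K)" using elim(3) \<gamma>_le[of ?K, OF of_nat_0_le_iff] by linarith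
    hence "M * (f j + \<gamma> powr ?K) \<le> M * (2 * 2 powr (- \<beta> * ?K))" using M by (intro mult_left_mono)
    hence "(b j)\<^sup>2 \<le> M * (2 * 2 powr (- \<beta> * ?K))" using elim(2) by linarith
    also have "\<dots> \<le> (2 * M + 1) * 2 powr (- \<beta> * ?K)" by (simp add: algebra_simps)
    also have "\<dots> \<le> 2 powr (\<beta> / 2 * ?K) * 2 powr (- \<beta> * ?K)" using elim(1) by (intro mult_right_mono) auto
    also have "\<dots> = (2 powr (- (\<beta> / 4) * ?K))\<^sup>2" by (simp add: powr_add[symmetric] powr_power)
    finally show ?case using abs_le_square_iff[of "b j" "2 powr (- (\<beta> / 4) * ?K)"] by simp
  qed
  thus ?thesis unfolding exp_small_def using \<beta> by (intro exI[of _ "\<beta> / 4"]) auto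
qed

lemma tendsto_nat_floor_mult_div:
  assumes n: "filterlim n at_top sequentially" and \<omega>: "0 \<le> \<omega>"
  shows "(\<lambda>j. real (nat \<lfloor>\<omega> * real (n j)\<rfloor>) / real (n j)) \<longlonglongrightarrow> \<omega>"
proof (rule tendsto_sandwich[of "\<lambda>j. \<omega> - 1 / real (n j)" _ _ "\<lambda>_. \<omega>"])
  have "eventually (\<lambda>j. 1 \<le> n j) sequentially" using n by (simp add: filterlim_at_top)
  hence n_pos: "eventually (\<lambda>j. 0 < real (n j)) sequentially" by eventually_elim simp
  thus "eventually (\<lambda>j. \<omega> - 1 / real (n j) \<le> real (nat \<lfloor>\<omega> * real (n j)\<rfloor>) / real (n j)) sequentially"
  proof eventually_elim
    case (elim j)
    have "\<omega> * real (n j) - 1 \<le> real (nat \<lfloor>\<omega> * real (n j)\<rfloor>)" using \<omega> by linarith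
    hence "(\<omega> * real (n j) - 1) / real (n j) \<le> real (nat \<lfloor>\<omega> * real (n j)\<rfloor>) / real (n j)"
      using elim by (intro divide_right_mono) auto
    thus ?case using elim by (simp add: diff_divide_distrib)
  qed
  show "eventually (\<lambda>j. real (nat \<lfloor>\<omega> * real (n j)\<rfloor>) / real (n j) \<le> \<omega>) sequentially"
    using n_pos
  proof eventually_elim
    case (elim j)
    have "real (nat \<lfloor>\<omega> * real (n j)\<rfloor>) \<le> \<omega> * real (n j)" using \<omega> by simp
    thus ?case using elim by (simp add: field_simps)
  qed
  have "(\<lambda>j. 1 / real (n j)) \<longlonglongrightarrow> 0"
    using tendsto_inverse_0_at_top[OF filterlim_compose[OF filterlim_real_sequentially n]]
    by (simp add: inverse_eq_divide)
  thus "(\<lambda>j. \<omega> - 1 / real (n j)) \<longlonglongrightarrow> \<omega>" using tendsto_diff[OF tendsto_const] by fastforce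
qed simp

lemma filterlim_at_top_of_ratio_tendsto:
  fixes n k :: "nat \<Rightarrow> nat"
  assumes n: "filterlim n at_top sequentially" and k: "(\<lambda>j. real (k j) / real (n j)) \<longlonglongrightarrow> R" "0 < R"
  shows "filterlim k at_top sequentially"
proof -
  have lim: "filterlim (\<lambda>j. real (k j) / real (n j) * real (n j)) at_top sequentially"
    using filterlim_tendsto_pos_mult_at_top[OF k filterlim_compose[OF filterlim_real_sequentially n]] .
  have "eventually (\<lambda>j. 1 \<le> n j) sequentially" using n by (simp add: filterlim_at_top)
  hence "eventually (\<lambda>j. real (k j) / real (n j) * real (n j) = real (k j)) sequentially"
    by eventually_elim simp
  from iffD1[OF filterlim_cong[OF refl refl this] lim]
  have "\<forall>Z. eventually (\<lambda>j. Z \<le> real (k j)) sequentially" unfolding filterlim_at_top .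
  show ?thesis unfolding filterlim_at_top
  proof
    fix N :: nat
    have "eventually (\<lambda>j. real N \<le> real (k j)) sequentially" using \<open>\<forall>Z. _\<close> by blast
    thus "eventually (\<lambda>j. N \<le> k j) sequentially" by simp
  qed
qed

lemma eventually_code_parameters:
  fixes n k d :: "nat \<Rightarrow> nat"
  assumes n: "filterlim n at_top sequentially"
    and k: "(\<lambda>j. real (k j) / real (n j)) \<longlonglongrightarrow> R" "0 < R" "R < 1"
    and d: "(\<lambda>j. real (d j) / real (n j)) \<longlonglongrightarrow> \<delta>" "0 < \<delta>"
  shows "eventually (\<lambda>j. 1 \<le> n j \<and> \<delta> / 2 * real (n j) \<le> real (d j)
    \<and> 3 * R / 4 * real (n j) \<le> real (k j) \<and> k j \<le> n j) sequentially"
proof -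
  have "eventually (\<lambda>j. 1 \<le> n j) sequentially" using n by (simp add: filterlim_at_top)
  moreover have "eventually (\<lambda>j. \<delta> / 2 < real (d j) / real (n j)) sequentially"
    using order_tendstoD(1)[OF d(1), of "\<delta> / 2"] d(2) by simp
  moreover have "eventually (\<lambda>j. 3 * R / 4 < real (k j) / real (n j)) sequentially"
    using order_tendstoD(1)[OF k(1), of "3 * R / 4"] k(2) by simp
  moreover have "eventually (\<lambda>j. real (k j) / real (n j) < 1) sequentially"
    using order_tendstoD(2)[OF k(1,3)] .
  ultimately show ?thesis
  proof eventually_elim
    case (elim j)
    hence "0 < real (n j)" by simp
    thus ?case using elim by (simp add: field_simps)
  qed
qed

lemma obtain_min_abs_bias_of_weight:
  fixes n w :: "nat \<Rightarrow> nat" and Z :: "nat \<Rightarrow> nat set pmf"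
  assumes "\<And>j. w j \<le> n j"
  obtains e where "\<And>j. e j \<in> {e\<in>vecs (n j). card e = w j}"
    "\<And>j e'. e' \<in> {e\<in>vecs (n j). card e = w j} \<Longrightarrow> \<bar>bias_lin (e j) (Z j)\<bar> \<le> \<bar>bias_lin e' (Z j)\<bar>"
proof -
  let ?S = "\<lambda>j. {e\<in>vecs (n j). card e = w j}" and ?f = "\<lambda>j e. \<bar>bias_lin e (Z j)\<bar>"
  have "{..<w j} \<in> ?S j" for j using assms unfolding vecs_def by simp
  hence "finite (?S j)" "?S j \<noteq> {}" for j by (simp, metis empty_iff)
  hence "arg_min_on (?f j) (?S j) \<in> ?S j \<and> (\<forall>e'\<in>?S j. ?f j (arg_min_on (?f j) (?S j)) \<le> ?f j e')" for j
    using arg_min_if_finite[of "?S j" "?f j"] by (auto simp: not_less)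
  thus thesis by (intro that[of "\<lambda>j. arg_min_on (?f j) (?S j)"]) auto
qed

context krawtchouk_bounded
begin

lemma exists_weight_vector_bias_sq_le_exp:
  assumes P: "set_pmf P \<subseteq> vecs n" and rows: "\<forall>r<k. G r \<in> vecs n"
    and n: "1 \<le> n" and w: "real w \<le> c * real n"
    and \<rho>: "0 < 1 - 2 * real w / real n" "1 - 2 * real w / real n \<le> \<rho>1" "\<rho>1 < 1"
    and d: "\<delta> / 2 * real n \<le> real (min_dist (dual_code n (lin_code n k G)))" "0 \<le> \<delta>"
    and k: "3 * R / 4 * real n \<le> real k" "k \<le> n" "R \<le> 1"
    and lam: "0 < lam" "lam \<le> 1" "0 \<le> \<epsilon>" "lam powr (-\<epsilon>) * (1 + lam) \<le> 2 powr (R / 2)"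
    and \<gamma>: "\<rho>1 powr (\<delta> / 4) \<le> \<gamma>" "\<rho>1 powr \<epsilon> \<le> \<gamma>" "2 powr (- R / 4) \<le> \<gamma>"
  shows "\<exists>e\<in>{e\<in>vecs n. card e = w}.
    (2 * bias_lin e P)\<^sup>2 \<le> Cst * (1 / \<rho>1 + 6) * (tv_to_uniform k G P + \<gamma> powr real k)"
proof -
  define \<rho> where "\<rho> = 1 - 2 * real w / real n"
  define d where "d = min_dist (dual_code n (lin_code n k G))"
  define tv where "tv = tv_to_uniform k G P"
  obtain e where e: "e \<in> {e\<in>vecs n. card e = w}" and bias: "(2 * bias_lin e P)\<^sup>2 \<le> Cst * (\<rho> ^ (d div 2)
      + 2 * \<rho> powr (\<epsilon> * real n) + 4 * (lam powr (- (\<epsilon> * real n)) * (1 + lam) ^ n / 2 ^ k) + 4 * tv)"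
    using exists_weight_vector_bias_sq_le[OF P rows d_def[THEN eq_refl] n w \<rho>_def \<rho>(1)[folded \<rho>_def] lam(1,2)]
    unfolding tv_def by blast
  have "\<rho> ^ (d div 2) \<le> (\<rho>1 powr (\<delta> / 4)) powr real k / \<rho>1"
    using power_div_two_le_powr[OF \<rho>[folded \<rho>_def] d(2) d(1)[folded d_def] k(2)] .
  also have "\<dots> \<le> \<gamma> powr real k / \<rho>1" using \<gamma>(1) \<rho> by (intro divide_right_mono powr_mono2) auto
  finally have T1: "\<rho> ^ (d div 2) \<le> \<gamma> powr real k / \<rho>1" .
  have "\<rho> powr (\<epsilon> * real n) \<le> (\<rho>1 powr \<epsilon>) powr real k"
    using powr_mult_le_powr[OF \<rho>[folded \<rho>_def] lam(3) k(2)] .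
  also have "\<dots> \<le> \<gamma> powr real k" using \<gamma>(2) by (intro powr_mono2) auto
  finally have T2: "\<rho> powr (\<epsilon> * real n) \<le> \<gamma> powr real k" .
  have "lam powr (- (\<epsilon> * real n)) * (1 + lam) ^ n / 2 ^ k \<le> (2 powr (- R / 4)) powr real k"
    using powr_mult_power_div_le_powr[OF lam(1,4) k] .
  also have "\<dots> \<le> \<gamma> powr real k" using \<gamma>(3) by (intro powr_mono2) auto
  finally have T3: "lam powr (- (\<epsilon> * real n)) * (1 + lam) ^ n / 2 ^ k \<le> \<gamma> powr real k" .
  have "0 \<le> tv / \<rho>1" "0 \<le> tv" using \<rho> unfolding tv_def by (simp_all add: tv_to_uniform_nonneg)
  moreover have "(1 / \<rho>1 + 6) * (tv + \<gamma> powr real k) = tv / \<rho>1 + 6 * tv + \<gamma> powr real k / \<rho>1 + 6 * \<gamma> powr real k"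
    using \<rho> by (simp add: field_simps)
  ultimately have "\<rho> ^ (d div 2) + 2 * \<rho> powr (\<epsilon> * real n)
      + 4 * (lam powr (- (\<epsilon> * real n)) * (1 + lam) ^ n / 2 ^ k) + 4 * tv
      \<le> (1 / \<rho>1 + 6) * (tv + \<gamma> powr real k)"
    using T1 T2 T3 by linarith
  hence "Cst * (\<rho> ^ (d div 2) + 2 * \<rho> powr (\<epsilon> * real n)
      + 4 * (lam powr (- (\<epsilon> * real n)) * (1 + lam) ^ n / 2 ^ k) + 4 * tv)
      \<le> Cst * ((1 / \<rho>1 + 6) * (tv + \<gamma> powr real k))"
    using Cst_ge_1 by (intro mult_left_mono) auto
  with bias have "(2 * bias_lin e P)\<^sup>2 \<le> Cst * ((1 / \<rho>1 + 6) * (tv + \<gamma> powr real k))"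
    by (rule order_trans)
  thus ?thesis using e unfolding tv_def mult.assoc by (rule bexI)
qed

lemma eventually_min_bias_sq_le:
  fixes n k w :: "nat \<Rightarrow> nat" and G :: "nat \<Rightarrow> nat \<Rightarrow> nat set" and Z :: "nat \<Rightarrow> nat set pmf"
    and e :: "nat \<Rightarrow> nat set"
  assumes R: "0 < R" "R < 1" and \<omega>: "0 < \<omega>" "\<omega> < c" and \<delta>: "0 < \<delta>"
    and rows: "\<And>j. \<forall>r<k j. G j r \<in> vecs (n j)"
    and n_inf: "filterlim n at_top sequentially"
    and rate: "(\<lambda>j. real (k j) / real (n j)) \<longlonglongrightarrow> R"
    and dual: "(\<lambda>j. real (min_dist (dual_code (n j) (lin_code (n j) (k j) (G j)))) / real (n j)) \<longlonglongrightarrow> \<delta>"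
    and Z: "\<And>j. set_pmf (Z j) \<subseteq> vecs (n j)"
    and w: "\<And>j. real (w j) \<le> \<omega> * real (n j)" "(\<lambda>j. real (w j) / real (n j)) \<longlonglongrightarrow> \<omega>"
    and e_min: "\<And>j e'. e' \<in> {e\<in>vecs (n j). card e = w j} \<Longrightarrow>
      \<bar>bias_lin (e j) (Z j)\<bar> \<le> \<bar>bias_lin e' (Z j)\<bar>"
  obtains M \<gamma> where "0 \<le> M" "0 < \<gamma>" "\<gamma> < 1"
    "eventually (\<lambda>j. (bias_lin (e j) (Z j))\<^sup>2 \<le> M * (tv_to_uniform (k j) (G j) (Z j) + \<gamma> powr real (k j)))
      sequentially"
proof -
  define \<rho>1 where "\<rho>1 = 1 - \<omega>"
  have \<rho>1: "1 - 2 * \<omega> < \<rho>1" "0 < \<rho>1" "\<rho>1 < 1" "0 < 1 - 2 * \<omega>"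
    using \<omega> c_le_half unfolding \<rho>1_def by auto
  obtain lam \<epsilon> where lam: "0 < lam" "lam \<le> 1" "0 < \<epsilon>" "lam powr (-\<epsilon>) * (1 + lam) \<le> 2 powr (R / 2)"
    using exists_chernoff_parameters[of "R / 2"] R by auto
  define \<gamma> where "\<gamma> = max (\<rho>1 powr (\<delta> / 4)) (max (\<rho>1 powr \<epsilon>) (2 powr (- R / 4)))"
  have "\<rho>1 powr (\<delta> / 4) < 1 powr (\<delta> / 4)" "\<rho>1 powr \<epsilon> < 1 powr \<epsilon>"
    using \<rho>1 \<delta> lam(3) by (intro powr_less_mono2; simp)+
  moreover have "2 powr (- R / 4) < 1" using R by (simp add: powr_less_one)
  ultimately have \<gamma>: "0 < \<gamma>" "\<gamma> < 1" unfolding \<gamma>_def by (simp_all add: less_max_iff_disj)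
  have \<gamma>_ge: "\<rho>1 powr (\<delta> / 4) \<le> \<gamma>" "\<rho>1 powr \<epsilon> \<le> \<gamma>" "2 powr (- R / 4) \<le> \<gamma>"
    unfolding \<gamma>_def by auto
  have "(\<lambda>j. 1 - 2 * real (w j) / real (n j)) \<longlonglongrightarrow> 1 - 2 * \<omega>"
    using tendsto_diff[OF tendsto_const tendsto_mult[OF tendsto_const w(2)], of 1 2] by simp
  note params = order_tendstoD(1)[OF this \<rho>1(4)] order_tendstoD(2)[OF this \<rho>1(1)]
    eventually_code_parameters[OF n_inf rate R dual \<delta>]
  show thesis
  proof (rule that[of "Cst * (1 / \<rho>1 + 6)" \<gamma>])
    show "eventually (\<lambda>j. (bias_lin (e j) (Z j))\<^sup>2
        \<le> Cst * (1 / \<rho>1 + 6) * (tv_to_uniform (k j) (G j) (Z j) + \<gamma> powr real (k j))) sequentially"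
      using params
    proof eventually_elim
      case (elim j)
      have "\<omega> * real (n j) \<le> c * real (n j)" using \<omega> by (intro mult_right_mono) auto
      hence w_c: "real (w j) \<le> c * real (n j)" using w(1)[of j] by linarith
      from elim(3) have code: "1 \<le> n j"
        "\<delta> / 2 * real (n j) \<le> real (min_dist (dual_code (n j) (lin_code (n j) (k j) (G j))))"
        "3 * R / 4 * real (n j) \<le> real (k j)" "k j \<le> n j" by auto
      obtain e' where e': "e' \<in> {e\<in>vecs (n j). card e = w j}" and bias: "(2 * bias_lin e' (Z j))\<^sup>2
          \<le> Cst * (1 / \<rho>1 + 6) * (tv_to_uniform (k j) (G j) (Z j) + \<gamma> powr real (k j))"
        using exists_weight_vector_bias_sq_le_exp[OF Z rows code(1) w_c elim(1) less_imp_le[OF elim(2)] \<rho>1(3)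
            code(2) less_imp_le[OF \<delta>] code(3,4) less_imp_le[OF R(2)] lam(1,2) less_imp_le[OF lam(3)] lam(4) \<gamma>_ge]
        by blast
      have "(bias_lin (e j) (Z j))\<^sup>2 \<le> (bias_lin e' (Z j))\<^sup>2"
        using e_min[OF e'] by (simp add: abs_le_square_iff)
      moreover have "(2 * bias_lin e' (Z j))\<^sup>2 = 4 * (bias_lin e' (Z j))\<^sup>2" by (simp add: power_mult_distrib)
      ultimately show ?case using bias zero_le_power2[of "bias_lin e' (Z j)"] by linarith
    qed
  qed (use \<gamma> \<rho>1 Cst_ge_1 in auto)
qed

end

theorem mainTheorem6:
  fixes c Cst R \<omega> \<delta> :: real
    and n k :: "nat \<Rightarrow> nat"
    and G :: "nat \<Rightarrow> nat \<Rightarrow> nat set"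
    and Z :: "nat \<Rightarrow> nat set pmf"
  assumes c: "0 < c" "c < 1" and Cst: "Cst \<ge> 1"
    and kraw: "\<And>N w i. N \<ge> 1 \<Longrightarrow> real w \<le> c * real N \<Longrightarrow> real i \<le> real N / 2 \<Longrightarrow>
        \<bar>real_of_int (krawtchouk N w i)\<bar> \<le> Cst * real (N choose w) * (1 - 2 * real w / real N) ^ i"
    and R: "0 < R" "R < 1"
    and \<omega>: "0 < \<omega>" "\<omega> < c"
    and \<delta>: "\<delta> > 0"
    and gen: "\<And>j. is_gen_matrix (n j) (k j) (G j)"
    and n_inf: "filterlim n at_top sequentially"
    and rate: "(\<lambda>j. real (k j) / real (n j)) \<longlonglongrightarrow> R"
    and dual: "(\<lambda>j. real (min_dist (dual_code (n j) (lin_code (n j) (k j) (G j)))) / real (n j)) \<longlonglongrightarrow> \<delta>"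
    and Z: "\<And>j. set_pmf (Z j) \<subseteq> vecs (n j)"
  shows "\<exists>e :: nat \<Rightarrow> nat set.
           (\<forall>j. e j \<in> vecs (n j)) \<and>
           (\<lambda>j. real (card (e j)) / real (n j)) \<longlonglongrightarrow> \<omega> \<and>
           (negl k (\<lambda>j. tv_dist (vecs (k j)) (map_pmf (mat_vec (k j) (G j)) (Z j)) (uniform_vec (k j)))
              \<longrightarrow> negl k (\<lambda>j. \<bar>bias_lin (e j) (Z j)\<bar>)) \<and>
           (exp_small k (\<lambda>j. tv_dist (vecs (k j)) (map_pmf (mat_vec (k j) (G j)) (Z j)) (uniform_vec (k j)))
              \<longrightarrow> exp_small k (\<lambda>j. \<bar>bias_lin (e j) (Z j)\<bar>))"
proof -
  interpret krawtchouk_bounded c Cst using c Cst kraw by unfold_locales auto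
  define w where "w j = nat \<lfloor>\<omega> * real (n j)\<rfloor>" for j
  have w_le: "real (w j) \<le> \<omega> * real (n j)" for j unfolding w_def using \<omega> by simp
  have w_lim: "(\<lambda>j. real (w j) / real (n j)) \<longlonglongrightarrow> \<omega>"
    unfolding w_def using tendsto_nat_floor_mult_div[OF n_inf] \<omega> by simp
  have "\<omega> * real (n j) \<le> real (n j)" for j using \<omega> c by (intro mult_left_le_one_le) auto
  hence w_le_n: "w j \<le> n j" for j using w_le[of j] by (meson of_nat_le_iff order_trans)
  obtain e where e: "\<And>j. e j \<in> {e\<in>vecs (n j). card e = w j}"
    and e_min: "\<And>j e'. e' \<in> {e\<in>vecs (n j). card e = w j} \<Longrightarrow> \<bar>bias_lin (e j) (Z j)\<bar> \<le> \<bar>bias_lin e' (Z j)\<bar>"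
    by (rule obtain_min_abs_bias_of_weight[where n = n and w = w and Z = Z, OF w_le_n]) blast
  obtain M \<gamma> where M: "0 \<le> M" "0 < \<gamma>" "\<gamma> < 1" and bound: "eventually (\<lambda>j. (bias_lin (e j) (Z j))\<^sup>2
      \<le> M * (tv_to_uniform (k j) (G j) (Z j) + \<gamma> powr real (k j))) sequentially"
    using eventually_min_bias_sq_le[OF R \<omega> \<delta> _ n_inf rate dual Z w_le w_lim e_min] gen
    unfolding is_gen_matrix_def by blast
  have k_inf: "filterlim k at_top sequentially" by (rule filterlim_at_top_of_ratio_tendsto[OF n_inf rate R(1)])
  show ?thesis
  proof (intro exI[of _ e] conjI allI impI)
    show "e j \<in> vecs (n j)" for j using e by simp
    show "(\<lambda>j. real (card (e j)) / real (n j)) \<longlonglongrightarrow> \<omega>" using e w_lim by simp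
  qed (use negl_abs_of_sq_le[OF k_inf bound M(2,3,1)] exp_small_abs_of_sq_le[OF k_inf bound M(2,3,1)]
      in \<open>simp_all add: tv_to_uniform_def\<close>)
qed

end
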